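(* If $p_4,p_5\in\mathbb H^2_{\mathbb C}$ are distinct points, then there exist $p_1\in\mathrm EV$ and $p_2,p_3\in\mathbb H^2_{\mathbb C}$ such that $R^{p_5}R^{p_4}R^{p_3}R^{p_2}R^{p_1}=\omega^2$ in $\mathrm{SU}(2,1)$.
   Context: $V=\mathbb C^3$ with Hermitian form of signature $(-,+,+)$; $\mathbb H^2_{\mathbb C}$ is the set of negative points ($\langle p,p\rangle<0$) of $\mathbb PV$ and $\mathrm EV$ the set of positive points. $\mathrm{SU}(2,1)$ is the group of determinant-one form-preserving linear maps; $\omega=e^{2\pi i/3}$. For nonisotropic $p$, $R^px=2\frac{\langle x,p\rangle}{\langle p,p\rangle}p-x$. *)

theory Defs
  imports "HOL-Analysis.Analysis"
begin

definition herm :: "complex^3 \<Rightarrow> complex^3 \<Rightarrow> complex" where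
  "herm x y = - (x$1 * cnj (y$1)) + x$2 * cnj (y$2) + x$3 * cnj (y$3)"

text \<open>Negative points (complex hyperbolic plane) and positive points, via representatives.\<close>
definition negative :: "complex^3 \<Rightarrow> bool" where
  "negative p \<longleftrightarrow> Re (herm p p) < 0"

definition positive :: "complex^3 \<Rightarrow> bool" where
  "positive p \<longleftrightarrow> Re (herm p p) > 0"

text \<open>Two nonzero vectors represent the same point of PV iff they are proportional.\<close>
definition same_point :: "complex^3 \<Rightarrow> complex^3 \<Rightarrow> bool" where
  "same_point p q \<longleftrightarrow> (\<exists>c::complex. q = c *s p)"

definition refl :: "complex^3 \<Rightarrow> complex^3 \<Rightarrow> complex^3" where
  "refl p x = (2 * herm x p / herm p p) *s p - x"

definition omega :: complex where
  "omega = exp (2 * pi * \<i> / 3)"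

end

theory Submission
  imports Defs
begin

text \<open>
  An isometry of \<open>V\<close> moves the negative points \<open>p\<^sub>4\<close>, \<open>p\<^sub>5\<close> to \<open>(1, 0, 0)\<close> and
  \<open>(1 + A, 1 - A, 0)\<close> for some real \<open>A > 1\<close>. For this pair an explicit positive point
  \<open>p\<^sub>1\<close> makes \<open>g = \<omega>\<^sup>2 R\<^sup>p\<^sup>4 R\<^sup>p\<^sup>5 R\<^sup>p\<^sup>1\<close> loxodromic with the real eigenvalues
  \<open>A\<close>, \<open>1/A\<close>, \<open>1\<close>: the first two with isotropic eigenvectors \<open>a\<close>, \<open>b\<close> (scaled so that
  \<open>\<langle>a, b\<rangle>\<close> is real and negative), the last one with eigenvector polar to them. Such a map is the
  product \<open>R\<^sup>A\<^sup>a\<^sup>+\<^sup>b R\<^sup>a\<^sup>+\<^sup>b\<close> of reflections in two negative points, which gives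
  \<open>R\<^sup>p\<^sup>5 R\<^sup>p\<^sup>4 R\<^sup>p\<^sup>3 R\<^sup>p\<^sup>2 R\<^sup>p\<^sup>1 = \<omega>\<^sup>2\<close>.
\<close>

section \<open>The Hermitian form and reflections\<close>

lemma herm_add_left: "herm (x + y) z = herm x z + herm y z"
  unfolding herm_def by (simp add: algebra_simps)

lemma herm_add_right: "herm z (x + y) = herm z x + herm z y"
  unfolding herm_def by (simp add: algebra_simps)

lemma herm_diff_left: "herm (x - y) z = herm x z - herm y z"
  unfolding herm_def by (simp add: algebra_simps)

lemma herm_diff_right: "herm z (x - y) = herm z x - herm z y"
  unfolding herm_def by (simp add: algebra_simps)

lemma herm_minus_left: "herm (- x) z = - herm x z"
  unfolding herm_def by (simp add: algebra_simps)

lemma herm_scale_left: "herm (c *s x) z = c * herm x z"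
  unfolding herm_def by (simp add: algebra_simps)

lemma herm_scale_right: "herm z (c *s x) = cnj c * herm z x"
  unfolding herm_def by (simp add: algebra_simps)

lemmas herm_simps = herm_add_left herm_add_right herm_diff_left herm_diff_right
  herm_minus_left herm_scale_left herm_scale_right

lemma herm_commute: "herm x y = cnj (herm y x)"
  unfolding herm_def by simp

lemma herm_eq_0_commute: "herm x y = 0 \<longleftrightarrow> herm y x = 0"
  by (metis herm_commute complex_cnj_zero)

lemma of_real_Re_herm_self: "complex_of_real (Re (herm x x)) = herm x x"
  by (simp add: herm_def complex_eq_iff)

lemma Re_herm_self: "Re (herm x x) = (cmod (x$2))\<^sup>2 + (cmod (x$3))\<^sup>2 - (cmod (x$1))\<^sup>2"
  unfolding herm_def by (simp add: complex_mult_cnj cmod_power2)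

lemma herm_nondegenerate:
  assumes "\<And>y. herm x y = 0"
  shows "x = 0"
proof -
  have "herm x (axis 1 1) = - x$1" "herm x (axis 2 1) = x$2" "herm x (axis 3 1) = x$3"
    by (simp_all add: herm_def axis_def)
  then show ?thesis using assms by (simp add: vec_eq_iff forall_3)
qed

lemma negative_imp_nonzero: "negative p \<Longrightarrow> p \<noteq> 0"
  by (auto simp: negative_def herm_def)

lemma orthogonal_negative_imp_positive:
  assumes p: "negative p" and wp: "herm w p = 0" and "w \<noteq> 0"
  shows "positive w"
proof (rule ccontr)
  assume nonpos: "\<not> positive w"
  define z where "z = p$1 *s w - w$1 *s p"
  have "herm p w = 0"
    using wp herm_eq_0_commute by blast
  then have "herm z z = (p$1 * cnj (p$1)) * herm w w + (w$1 * cnj (w$1)) * herm p p"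
    unfolding z_def by (simp add: herm_simps wp algebra_simps)
  then have "Re (herm z z) = (cmod (p$1))\<^sup>2 * Re (herm w w) + (cmod (w$1))\<^sup>2 * Re (herm p p)"
    by (simp add: complex_mult_cnj cmod_power2 del: of_real_power)
  moreover have "Re (herm z z) \<ge> 0"
    by (simp add: z_def Re_herm_self)
  moreover have "(cmod (p$1))\<^sup>2 * Re (herm w w) \<le> 0" "(cmod (w$1))\<^sup>2 * Re (herm p p) \<le> 0"
    using nonpos p by (simp_all add: positive_def negative_def mult_nonneg_nonpos)
  ultimately have "(cmod (p$1))\<^sup>2 * Re (herm w w) = 0" "(cmod (w$1))\<^sup>2 * Re (herm p p) = 0"
    by linarith+
  moreover have "p$1 \<noteq> 0" "Re (herm p p) \<noteq> 0"
    using p by (auto simp: negative_def Re_herm_self) (metis add_nonneg_nonneg not_le zero_le_power2)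
  ultimately have "Re (herm w w) = 0" "w$1 = 0"
    by simp_all
  then show False
    using nonpos \<open>w \<noteq> 0\<close> by (simp add: Re_herm_self vec_eq_iff forall_3)
qed

lemma refl_add: "refl p (x + y) = refl p x + refl p y"
  unfolding refl_def by (simp add: herm_add_left vec_eq_iff add_divide_distrib algebra_simps)

lemma refl_scale: "refl p (c *s x) = c *s refl p x"
  unfolding refl_def by (simp add: herm_scale_left vec_eq_iff algebra_simps)

lemma refl_refl:
  assumes "herm p p \<noteq> 0"
  shows "refl p (refl p x) = x"
proof -
  have "herm (refl p x) p = herm x p"
    unfolding refl_def using assms by (simp add: herm_simps)
  then show ?thesis
    unfolding refl_def[of p "refl p x"] by (simp add: refl_def vec_eq_iff)
qed

lemma refl_smult_point:
  assumes "c \<noteq> 0"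
  shows "refl (c *s p) = refl p"
  using assms by (simp add: refl_def herm_simps vec_eq_iff fun_eq_iff field_simps)

lemma refl_same_point:
  assumes "same_point p q" and "q \<noteq> 0"
  shows "refl q = refl p"
  using assms refl_smult_point unfolding same_point_def by force

text \<open>Clears the denominators of both reflections, turning the model computations below
  into polynomial identities.\<close>
lemma smult_refl_eq_smult_reflI:
  assumes "herm p p \<noteq> 0" and "herm q q \<noteq> 0"
    and "(a * herm q q) *s ((2 * herm x p) *s p - herm p p *s x)
       = (b * herm p p) *s ((2 * herm y q) *s q - herm q q *s y)"
  shows "a *s refl p x = b *s refl q y"
  using assms unfolding refl_def by (simp add: vec_eq_iff field_simps)

lemma refl_refl_isotropic_pair:
  assumes aa: "herm a a = 0" and bb: "herm b b = 0"
    and ab: "cnj (herm a b) = herm a b" "herm a b \<noteq> 0" and A: "cnj A = A" "A \<noteq> 0"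
  shows "refl (A *s a + b) (refl (a + b) a) = A *s a"
    and "refl (A *s a + b) (refl (a + b) b) = (1 / A) *s b"
    and "herm s a = 0 \<Longrightarrow> herm s b = 0 \<Longrightarrow> refl (A *s a + b) (refl (a + b) s) = s"
proof -
  have ba: "herm b a = herm a b" using ab herm_commute by metis
  have "refl (a + b) a = b" "refl (A *s a + b) b = A *s a"
    "refl (a + b) b = a" "refl (A *s a + b) a = (1 / A) *s b"
    using ab A by (simp_all add: refl_def herm_simps aa bb ba vec_eq_iff field_simps)
  then show "refl (A *s a + b) (refl (a + b) a) = A *s a"
    and "refl (A *s a + b) (refl (a + b) b) = (1 / A) *s b"
    by simp_all
  assume "herm s a = 0" "herm s b = 0"
  then show "refl (A *s a + b) (refl (a + b) s) = s"
    by (simp add: refl_def herm_simps)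
qed

section \<open>Orthonormal frames\<close>

definition orthonormal_frame :: "complex^3 \<Rightarrow> complex^3 \<Rightarrow> complex^3 \<Rightarrow> bool" where
  "orthonormal_frame f0 f1 f2 \<longleftrightarrow> herm f0 f0 = -1 \<and> herm f1 f1 = 1 \<and> herm f2 f2 = 1 \<and>
     herm f0 f1 = 0 \<and> herm f0 f2 = 0 \<and> herm f1 f2 = 0"

definition frame_map :: "complex^3 \<Rightarrow> complex^3 \<Rightarrow> complex^3 \<Rightarrow> complex^3 \<Rightarrow> complex^3" where
  "frame_map f0 f1 f2 c = c$1 *s f0 + c$2 *s f1 + c$3 *s f2"

lemma herm_frame_map:
  assumes "orthonormal_frame f0 f1 f2"
  shows "herm (frame_map f0 f1 f2 c) (frame_map f0 f1 f2 d) = herm c d"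
proof -
  have "herm f1 f0 = 0" "herm f2 f0 = 0" "herm f2 f1 = 0"
    using assms herm_eq_0_commute unfolding orthonormal_frame_def by blast+
  then show ?thesis
    using assms unfolding orthonormal_frame_def frame_map_def
    by (simp add: herm_simps) (simp add: herm_def algebra_simps)
qed

lemma linear_frame_map: "Vector_Spaces.linear (*s) (*s) (frame_map f0 f1 f2)"
  unfolding Vector_Spaces.linear_iff frame_map_def using vec.vector_space_axioms
  by (simp add: vec_eq_iff algebra_simps)

lemma refl_frame_map:
  assumes "orthonormal_frame f0 f1 f2"
  shows "refl (frame_map f0 f1 f2 p) (frame_map f0 f1 f2 x) = frame_map f0 f1 f2 (refl p x)"
  using vec.linear_diff[OF linear_frame_map] vec.linear_scale[OF linear_frame_map]
  unfolding refl_def herm_frame_map[OF assms] by metis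

lemma surj_frame_map:
  assumes "orthonormal_frame f0 f1 f2"
  shows "surj (frame_map f0 f1 f2)"
proof (rule vec.linear_inj_imp_surj[OF linear_frame_map])
  show "inj (frame_map f0 f1 f2)"
  proof (rule injI)
    fix c d assume "frame_map f0 f1 f2 c = frame_map f0 f1 f2 d"
    then have "herm (c - d) y = 0" for y
      using herm_frame_map[OF assms, of _ y] by (metis herm_diff_left diff_self)
    then show "c = d" using herm_nondegenerate by (metis eq_iff_diff_eq_0)
  qed
qed

definition herm_cross :: "complex^3 \<Rightarrow> complex^3 \<Rightarrow> complex^3" where
  "herm_cross f g = vector [cnj (f$2) * cnj (g$3) - cnj (f$3) * cnj (g$2),
                            cnj (f$1) * cnj (g$3) - cnj (f$3) * cnj (g$1),
                            cnj (f$2) * cnj (g$1) - cnj (f$1) * cnj (g$2)]"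

lemma orthonormal_frame_complete:
  assumes "herm f0 f0 = -1" "herm f1 f1 = 1" "herm f0 f1 = 0"
  shows "orthonormal_frame f0 f1 (herm_cross f0 f1)"
proof -
  have "herm f1 f0 = 0"
    using assms(3) herm_eq_0_commute by blast
  moreover have "herm (herm_cross f0 f1) (herm_cross f0 f1)
      = herm f0 f1 * herm f1 f0 - herm f0 f0 * herm f1 f1"
    "herm f0 (herm_cross f0 f1) = 0" "herm f1 (herm_cross f0 f1) = 0"
    unfolding herm_cross_def herm_def by (simp_all add: algebra_simps)
  ultimately show ?thesis
    using assms unfolding orthonormal_frame_def by simp
qed

section \<open>The model configuration\<close>

lemma omega_eq: "omega = Complex (-1/2) (sqrt 3 / 2)"
proof -
  have "omega = exp (\<i> * complex_of_real (2 * pi / 3))"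
    unfolding omega_def by (simp add: field_simps)
  then show ?thesis
    by (simp add: exp_eq_polar cis_conv_exp[symmetric] cis.ctr cos_120 sin_120)
qed

lemma cnj_omega: "cnj omega = - 1 - omega"
  unfolding omega_eq by (simp add: complex_eq_iff)

lemma omega_times_omega: "omega * omega = - 1 - omega"
  unfolding omega_eq by (simp add: complex_eq_iff field_simps)

lemma omega_times_omega_times: "omega * (omega * x) = - x - omega * x"
  by (simp add: mult.assoc[symmetric] omega_times_omega algebra_simps)

lemmas omega_reduce = cnj_omega omega_times_omega omega_times_omega_times

text \<open>\<open>model_p1 A\<close> is chosen so that \<open>\<omega>\<^sup>2 R\<^sup>p\<^sup>4 R\<^sup>p\<^sup>5 R\<^sup>p\<^sup>1\<close> has eigenvalues \<open>A\<close>, \<open>1/A\<close>, \<open>1\<close>,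
  with eigenvectors \<open>iso_a A\<close>, \<open>iso_b A\<close>, \<open>polar A\<close>; the factor \<open>\<omega>\<^sup>2\<close> in \<open>iso_b\<close> makes
  \<open>\<langle>iso_a A, iso_b A\<rangle>\<close> real.\<close>
definition model_p4 :: "complex^3" where
  "model_p4 = vector [1, 0, 0]"

definition model_p5 :: "complex \<Rightarrow> complex^3" where
  "model_p5 A = vector [1 + A, 1 - A, 0]"

definition model_p1 :: "complex \<Rightarrow> complex^3" where
  "model_p1 A = vector
    [(2 + omega) + (1 + omega) * A + (1 + 2 * omega) * A^2,
     (-2 + omega) + (1 + omega) * A + (1 - 2 * omega) * A^2,
     2 * omega + (2 + 2 * omega) * A + 2 * A^2]"

definition iso_a :: "complex \<Rightarrow> complex^3" where
  "iso_a A = vector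
    [(-2 - 3 * omega) + 2 * A - omega * A^3,
     (2 + omega) - 2 * A - omega * A^3,
     2 - 2 * omega * A - (2 + 2 * omega) * A^2]"

definition iso_b :: "complex \<Rightarrow> complex^3" where
  "iso_b A = omega^2 *s vector
    [(2 + 2 * omega) - (2 + omega) * A^2 + (1 + omega) * A^3 + (3 + 2 * omega) * A^4,
     (-2 - 2 * omega) + (2 + 3 * omega) * A^2 + (1 + omega) * A^3 - (1 + 2 * omega) * A^4,
     2 * omega * A + 2 * omega * A^2 + 2 * A^3 + 2 * A^4]"

definition polar :: "complex \<Rightarrow> complex^3" where
  "polar A = vector
    [(-2 - 2 * omega) - (1 + omega) * A + (2 - omega) * A^2 + A^3,
     (2 + 2 * omega) - (1 + omega) * A - (2 + omega) * A^2 + A^3,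
     -2 * omega - 2 * omega * A^3]"

definition model_p2 :: "complex \<Rightarrow> complex^3" where
  "model_p2 A = iso_a A + iso_b A"

definition model_p3 :: "complex \<Rightarrow> complex^3" where
  "model_p3 A = A *s iso_a A + iso_b A"

text \<open>The identities of the model are polynomial in \<open>A\<close> and \<open>\<omega>\<close>; they are checked by
  expanding and reducing modulo \<open>\<omega>\<^sup>2 + \<omega> + 1 = 0\<close>.\<close>
lemmas model_calc = herm_def model_p4_def model_p5_def model_p1_def iso_a_def iso_b_def polar_def
  omega_reduce algebra_simps eval_nat_numeral

context
  fixes A :: complex
  assumes A_real: "cnj A = A"
begin

lemma herm_model_p1: "herm (model_p1 A) (model_p1 A) = 8 * (1 - A^2)^2"
  by (simp add: model_calc A_real)

lemma herm_model_p5: "herm (model_p5 A) (model_p5 A) = - 4 * A"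
  by (simp add: model_calc A_real)

lemma herm_iso_a: "herm (iso_a A) (iso_a A) = 0"
  by (simp add: model_calc A_real)

lemma herm_iso_b: "herm (iso_b A) (iso_b A) = 0"
  by (simp add: model_calc A_real)

lemma herm_iso_a_iso_b: "herm (iso_a A) (iso_b A) = - 4 * (A - 1)^4 * (A + 1)^3"
  by (simp add: model_calc A_real)

lemma herm_model_p2: "herm (model_p2 A) (model_p2 A) = - 8 * (A - 1)^4 * (A + 1)^3"
  by (simp add: model_p2_def model_calc A_real)

lemma herm_model_p3: "herm (model_p3 A) (model_p3 A) = - 8 * A * (A - 1)^4 * (A + 1)^3"
  by (simp add: model_p3_def model_calc A_real)

lemma herm_polar_iso_a: "herm (polar A) (iso_a A) = 0"
  by (simp add: model_calc A_real)

lemma herm_polar_iso_b: "herm (polar A) (iso_b A) = 0"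
  by (simp add: model_calc A_real)

lemma model_expansion:
  "(4 * (A - 1)^4 * (A + 1)^3) *s c
     = ((A + 1) * herm c (polar A)) *s polar A - herm c (iso_b A) *s iso_a A - herm c (iso_a A) *s iso_b A"
  by (simp add: model_calc A_real vec_eq_iff forall_3)

end

context
  fixes A :: complex
  assumes A_real: "cnj A = A" and A_nonzero: "A \<noteq> 0" and A_ne_one: "A \<noteq> 1" "A \<noteq> -1"
begin

lemma A_minus_one_nonzero: "A - 1 \<noteq> 0" and A_plus_one_nonzero: "A + 1 \<noteq> 0"
  using A_ne_one by (auto simp: add_eq_0_iff2)

lemma herm_model_p1_nonzero: "herm (model_p1 A) (model_p1 A) \<noteq> 0"
proof -
  have "1 - A^2 = - ((A - 1) * (A + 1))" by (simp add: algebra_simps power2_eq_square)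
  then show ?thesis
    using A_minus_one_nonzero A_plus_one_nonzero by (simp add: herm_model_p1[OF A_real])
qed

lemma herm_iso_a_iso_b_nonzero: "herm (iso_a A) (iso_b A) \<noteq> 0"
  using A_minus_one_nonzero A_plus_one_nonzero by (simp add: herm_iso_a_iso_b[OF A_real])

lemma herm_model_p5_nonzero: "herm (model_p5 A) (model_p5 A) \<noteq> 0"
  using A_nonzero by (simp add: herm_model_p5[OF A_real])

lemma model_eigen_polar:
  "omega^2 *s refl (model_p1 A) (polar A) = refl (model_p5 A) (refl model_p4 (polar A))"
  by (rule smult_refl_eq_smult_reflI[where b = 1, unfolded mult_1 vector_smult_lid,
        OF herm_model_p1_nonzero herm_model_p5_nonzero])
    (simp add: refl_def model_calc A_real vec_eq_iff forall_3)

lemma model_eigen_iso_a: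
  "omega^2 *s refl (model_p1 A) (iso_a A) = A *s refl (model_p5 A) (refl model_p4 (iso_a A))"
  by (rule smult_refl_eq_smult_reflI[OF herm_model_p1_nonzero herm_model_p5_nonzero])
    (simp add: refl_def model_calc A_real vec_eq_iff forall_3)

lemma model_eigen_iso_b:
  "omega^2 *s refl (model_p1 A) (iso_b A) = (1 / A) *s refl (model_p5 A) (refl model_p4 (iso_b A))"
proof -
  have "(A * omega^2) *s refl (model_p1 A) (iso_b A) = 1 *s refl (model_p5 A) (refl model_p4 (iso_b A))"
    by (rule smult_refl_eq_smult_reflI[OF herm_model_p1_nonzero herm_model_p5_nonzero])
      (simp add: refl_def model_calc A_real vec_eq_iff forall_3)
  then show ?thesis
    using A_nonzero by (simp add: vec_eq_iff field_simps)
qed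

lemma model_eigenvectors_span: "vec.span {iso_a A, iso_b A, polar A} = UNIV"
proof -
  have E: "4 * (A - 1)^4 * (A + 1)^3 \<noteq> 0"
    using A_minus_one_nonzero A_plus_one_nonzero by simp
  have "c \<in> vec.span {iso_a A, iso_b A, polar A}" for c
  proof -
    have "c = (1 / (4 * (A - 1)^4 * (A + 1)^3)) *s ((4 * (A - 1)^4 * (A + 1)^3) *s c)"
      using E by simp
    also have "\<dots> \<in> vec.span {iso_a A, iso_b A, polar A}"
      unfolding model_expansion[OF A_real]
      by (intro vec.span_scale vec.span_diff vec.span_base) auto
    finally show ?thesis .
  qed
  then show ?thesis by blast
qed

text \<open>\<open>R\<^sup>p\<^sup>3 R\<^sup>p\<^sup>2\<close> and \<open>\<omega>\<^sup>2 R\<^sup>p\<^sup>4 R\<^sup>p\<^sup>5 R\<^sup>p\<^sup>1\<close> have the same eigenvectors and eigenvalues,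
  hence coincide.\<close>
lemma model_product:
  "refl (model_p5 A) (refl model_p4 (refl (model_p3 A) (refl (model_p2 A) (refl (model_p1 A) c))))
     = omega^2 *s c"
proof -
  define L where "L x = refl (model_p5 A) (refl model_p4 (refl (model_p3 A) (refl (model_p2 A) x)))" for x
  define R where "R x = omega^2 *s refl (model_p1 A) x" for x
  have linear: "Vector_Spaces.linear (*s) (*s) L" "Vector_Spaces.linear (*s) (*s) R"
    unfolding Vector_Spaces.linear_iff L_def R_def using vec.vector_space_axioms
    by (simp_all add: refl_add refl_scale vector_add_ldistrib mult.commute)
  have "cnj (herm (iso_a A) (iso_b A)) = herm (iso_a A) (iso_b A)"
    by (simp add: herm_iso_a_iso_b A_real)
  note pair = refl_refl_isotropic_pair[OF herm_iso_a[OF A_real] herm_iso_b[OF A_real]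
      this herm_iso_a_iso_b_nonzero A_real A_nonzero, folded model_p2_def model_p3_def]
  have "L e = R e" if "e \<in> {iso_a A, iso_b A, polar A}" for e
    using that pair herm_polar_iso_a[OF A_real] herm_polar_iso_b[OF A_real]
      model_eigen_iso_a model_eigen_iso_b model_eigen_polar
    by (auto simp: L_def R_def refl_scale A_real)
  then have "L x = R x" for x
    using vec.linear_eq_on_span[OF linear] model_eigenvectors_span by blast
  from this[of "refl (model_p1 A) c"] show ?thesis
    unfolding L_def R_def refl_refl[OF herm_model_p1_nonzero] .
qed

end

section \<open>Normal form of a pair of negative points\<close>

lemma negative_normalize:
  assumes "negative p"
  obtains f where "herm f f = -1" and "same_point f p"
proof
  define s where "s = sqrt (- Re (herm p p))"
  have s: "s > 0" "s^2 = - Re (herm p p)"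
    using assms by (simp_all add: s_def negative_def)
  have "herm ((1 / of_real s) *s p) ((1 / of_real s) *s p) = of_real (Re (herm p p) / s^2)"
    by (subst of_real_Re_herm_self[symmetric]) (simp add: herm_simps power2_eq_square)
  then show "herm ((1 / of_real s) *s p) ((1 / of_real s) *s p) = -1"
    using s assms by (simp add: negative_def)
  have "p = of_real s *s ((1 / of_real s) *s p)"
    using s by (simp add: vec_eq_iff)
  then show "same_point ((1 / of_real s) *s p) p"
    unfolding same_point_def by blast
qed

lemma negative_pair_frame:
  assumes p: "negative p" and q: "negative q" and pq: "\<not> same_point p q"
  obtains f0 f1 and \<rho> \<sigma> :: real
  where "herm f0 f0 = -1" "herm f1 f1 = 1" "herm f0 f1 = 0" "0 < \<sigma>" "\<sigma> < \<rho>"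
    "same_point f0 p" "same_point (of_real \<rho> *s f0 - of_real \<sigma> *s f1) q"
proof -
  obtain f0 where f0: "herm f0 f0 = -1" "same_point f0 p"
    using negative_normalize[OF p] .
  then obtain k where k: "p = k *s f0" "k \<noteq> 0"
    using negative_imp_nonzero[OF p] unfolding same_point_def by fastforce
  define \<beta> where "\<beta> = herm q f0"
  define w where "w = q + \<beta> *s f0"
  have wf0: "herm w f0 = 0"
    by (simp add: w_def \<beta>_def herm_simps f0)
  then have f0w: "herm f0 w = 0"
    using herm_eq_0_commute by blast
  have "w \<noteq> 0"
  proof
    assume "w = 0"
    then have "q = (- \<beta> / k) *s p"
      using k by (simp add: w_def vec_eq_iff eq_neg_iff_add_eq_0)
    then show False using pq unfolding same_point_def by blast
  qed
  then have "positive w"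
    using orthogonal_negative_imp_positive[OF _ wf0] f0 by (simp add: negative_def)
  define \<rho> where "\<rho> = cmod \<beta>"
  define \<sigma> where "\<sigma> = sqrt (Re (herm w w))"
  have \<sigma>: "\<sigma> > 0" "herm w w = of_real (\<sigma>^2)"
    using \<open>positive w\<close> of_real_Re_herm_self[of w] by (simp_all add: \<sigma>_def positive_def)
  have \<rho>: "\<beta> * cnj \<beta> = of_real (\<rho>^2)"
    unfolding \<rho>_def by (rule complex_norm_square[symmetric])
  have q_decomp: "q = w - \<beta> *s f0"
    by (simp add: w_def)
  have "herm q q = herm w w - \<beta> * cnj \<beta>"
    unfolding q_decomp by (simp add: herm_simps wf0 f0w f0)
  then have "\<sigma>^2 < \<rho>^2"
    using q \<sigma> \<rho> by (simp add: negative_def)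
  then have "\<sigma> < \<rho>"
    using \<sigma> by (simp add: \<rho>_def power_less_imp_less_base)
  then have "\<beta> \<noteq> 0"
    using \<sigma> by (auto simp: \<rho>_def)
  define f1 where "f1 = (of_real \<rho> / (of_real \<sigma> * \<beta>)) *s w"
  show thesis
  proof
    show "herm f0 f0 = -1" "0 < \<sigma>" "\<sigma> < \<rho>" "same_point f0 p"
      using f0 \<sigma> \<open>\<sigma> < \<rho>\<close> by simp_all
    show "herm f1 f1 = 1"
      using \<sigma> \<rho> \<open>\<beta> \<noteq> 0\<close> \<open>\<sigma> < \<rho>\<close>
      by (simp add: f1_def herm_simps field_simps power2_eq_square)
    show "herm f0 f1 = 0"
      by (simp add: f1_def herm_simps f0w)
    have "q = (- \<beta> / of_real \<rho>) *s (of_real \<rho> *s f0 - of_real \<sigma> *s f1)"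
      using \<sigma> \<open>\<beta> \<noteq> 0\<close> \<open>\<sigma> < \<rho>\<close> by (simp add: q_decomp f1_def vec_eq_iff field_simps)
    then show "same_point (of_real \<rho> *s f0 - of_real \<sigma> *s f1) q"
      unfolding same_point_def by blast
  qed
qed

lemma negative_pair_normal_form:
  assumes "negative p" and "negative q" and "\<not> same_point p q"
  obtains f0 f1 f2 and a :: real where "orthonormal_frame f0 f1 f2" "a > 1"
    "same_point (frame_map f0 f1 f2 model_p4) p"
    "same_point (frame_map f0 f1 f2 (model_p5 (of_real a))) q"
proof -
  obtain f0 f1 and \<rho> \<sigma> :: real
    where f: "herm f0 f0 = -1" "herm f1 f1 = 1" "herm f0 f1 = 0" and "0 < \<sigma>" "\<sigma> < \<rho>"
      and p: "same_point f0 p" and q: "same_point (of_real \<rho> *s f0 - of_real \<sigma> *s f1) q"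
    using negative_pair_frame[OF assms] .
  define a where "a = (\<rho> + \<sigma>) / (\<rho> - \<sigma>)"
  let ?G = "frame_map f0 f1 (herm_cross f0 f1)"
  have "?G model_p4 = f0"
    by (simp add: frame_map_def model_p4_def)
  moreover have "of_real \<rho> *s f0 - of_real \<sigma> *s f1
      = ((of_real \<rho> - of_real \<sigma>) / 2) *s ?G (model_p5 (of_real a))"
  proof -
    have "complex_of_real \<rho> - of_real \<sigma> \<noteq> 0"
      using \<open>\<sigma> < \<rho>\<close> by simp
    moreover have "complex_of_real a = (of_real \<rho> + of_real \<sigma>) / (of_real \<rho> - of_real \<sigma>)"
      by (simp add: a_def)
    ultimately show ?thesis
      by (simp add: frame_map_def model_p5_def vec_eq_iff field_simps)
  qed
  ultimately have "same_point (?G model_p4) p" "same_point (?G (model_p5 (of_real a))) q"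
    using p q unfolding same_point_def by (auto simp: vector_smult_assoc)
  moreover have "a > 1"
    using \<open>0 < \<sigma>\<close> \<open>\<sigma> < \<rho>\<close> by (simp add: a_def field_simps)
  ultimately show thesis
    using that orthonormal_frame_complete[OF f] by blast
qed

theorem mainTheorem7:
  fixes p4 p5 :: "complex^3"
  assumes "negative p4" and "negative p5" and "\<not> same_point p4 p5"
  shows "\<exists>p1 p2 p3 :: complex^3. positive p1 \<and> negative p2 \<and> negative p3 \<and>
           (\<forall>x. refl p5 (refl p4 (refl p3 (refl p2 (refl p1 x)))) = (omega^2) *s x)"
proof -
  obtain f0 f1 f2 and a :: real where frame: "orthonormal_frame f0 f1 f2" and "a > 1"
    and p4: "same_point (frame_map f0 f1 f2 model_p4) p4"
    and p5: "same_point (frame_map f0 f1 f2 (model_p5 (of_real a))) p5"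
    using negative_pair_normal_form[OF assms] .
  let ?G = "frame_map f0 f1 f2" and ?A = "complex_of_real a"
  have A: "cnj ?A = ?A" "?A \<noteq> 0" "?A \<noteq> 1" "?A \<noteq> -1"
    using \<open>a > 1\<close> by (auto simp: complex_eq_iff)
  have "refl p5 (refl p4 (refl (?G (model_p3 ?A)) (refl (?G (model_p2 ?A)) (refl (?G (model_p1 ?A)) x))))
      = omega^2 *s x" for x
  proof -
    obtain c where "x = ?G c"
      using surj_frame_map[OF frame] by blast
    then show ?thesis
      using refl_same_point[OF p4 negative_imp_nonzero[OF assms(1)]]
        refl_same_point[OF p5 negative_imp_nonzero[OF assms(2)]]
      by (simp add: refl_frame_map[OF frame] model_product[OF A] vec.linear_scale[OF linear_frame_map])
  qed
  moreover have "positive (?G (model_p1 ?A))" "negative (?G (model_p2 ?A))" "negative (?G (model_p3 ?A))"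
    using \<open>a > 1\<close>
    by (simp_all add: positive_def negative_def herm_frame_map[OF frame]
        herm_model_p1 herm_model_p2 herm_model_p3 power2_eq_1_iff)
  ultimately show ?thesis by blast
qed

end
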